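(* In an $L$-user functional decode-and-forward multi-way relay network with lattice codes, under the equal average channel gain scenario, the average sum rate of the proposed pairing scheme equals that of pairing scheme A and that of pairing scheme B.
   Context: Setting: $L$ users exchange messages via a single relay (no direct links, half-duplex); one time frame has a multiple access phase and a broadcast phase, each of $L-1$ slots; in each multiple-access slot a pair of users transmits dithered lattice codewords simultaneously, the relay decodes the modulo-lattice sum of their lattice points (functional decode-and-forward) and broadcasts it in the corresponding broadcast slot; users recover all messages using their own. User power $P$, relay power $P_r$, AWGN power $N_0$; $h_{j,r}$ is the zero-mean complex Gaussian (block Rayleigh) channel between user $j$ and the relay (reciprocal), with variance $\sigma^2_{h_{j,r}}$. Pairing schemes: proposed: the common user $i$ is the user with largest average channel gain, and every other user pairs with $i$ in its own slot; scheme A: in slot $t\in[1,L-1]$ users $t$ and $t+1$ pair; scheme B: in slot $t$, users $t$ and $L-t+1$ pair if $1\le t\le\lfloor L/2\rfloor$, and users $t+1$ and $L-t+1$ pair if $\lfloor L/2\rfloor<t\le L-1$. Equal average channel gain scenario: all $\sigma^2_{h_{j,r}}$ equal and fixed over all frames (the proposed scheme's common user is chosen at random each frame). Sum rate: for a scheme in which slot $t$ pairs users $a_t,b_t$, $R_s=\frac{1}{2(L-1)}\sum_{t}\left(\log\left(\frac{|h_{a_t,r}|^2}{|h_{a_t,r}|^2+|h_{b_t,r}|^2}+\frac{P|h_{a_t,r}|^2}{N_0}\right)+\log\left(\frac{|h_{b_t,r}|^2}{|h_{a_t,r}|^2+|h_{b_t,r}|^2}+\frac{P|h_{b_t,r}|^2}{N_0}\right)\right)$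 ($\log$ base 2); the average sum rate is its expectation over channel realizations. *)

theory Defs
  imports "HOL-Probability.Probability"
begin

text \<open>Rate contribution of one multiple-access/broadcast slot pairing users with
  instantaneous channel gains x = |h_a|^2 and y = |h_b|^2 (log base 2).\<close>
definition pair_rate :: "real \<Rightarrow> real \<Rightarrow> real \<Rightarrow> real \<Rightarrow> real" where
  "pair_rate P N0 x y =
     log 2 (x / (x + y) + P * x / N0) + log 2 (y / (x + y) + P * y / N0)"

text \<open>A pairing scheme maps slot t in {1..L-1} to the pair of users (a_t, b_t).
  Sum rate for channel realisation h (h j = h_{j,r}).\<close>
definition sum_rate ::
  "nat \<Rightarrow> real \<Rightarrow> real \<Rightarrow> (nat \<Rightarrow> complex) \<Rightarrow> (nat \<Rightarrow> nat \<times> nat) \<Rightarrow> real" where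
  "sum_rate L P N0 h pr =
     (1 / (2 * (real L - 1))) *
     (\<Sum>t\<in>{1..L-1}. pair_rate P N0 ((cmod (h (fst (pr t))))\<^sup>2) ((cmod (h (snd (pr t))))\<^sup>2))"

text \<open>Proposed scheme with common user i: every other user j pairs with i in its
  own slot (slot t serves user t if t < i, and user t+1 otherwise).\<close>
definition proposed_pairing :: "nat \<Rightarrow> nat \<Rightarrow> nat \<times> nat" where
  "proposed_pairing i t = (i, if t < i then t else t + 1)"

definition schemeA_pairing :: "nat \<Rightarrow> nat \<times> nat" where
  "schemeA_pairing t = (t, t + 1)"

definition schemeB_pairing :: "nat \<Rightarrow> nat \<Rightarrow> nat \<times> nat" where
  "schemeB_pairing L t =
     (if 1 \<le> t \<and> t \<le> L div 2 then (t, L - t + 1) else (t + 1, L - t + 1))"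

definition avg_sum_rate ::
  "'a measure \<Rightarrow> nat \<Rightarrow> real \<Rightarrow> real \<Rightarrow> (nat \<Rightarrow> 'a \<Rightarrow> complex) \<Rightarrow> (nat \<Rightarrow> nat \<times> nat) \<Rightarrow> real" where
  "avg_sum_rate M L P N0 h pr = (\<integral>\<omega>. sum_rate L P N0 (\<lambda>j. h j \<omega>) pr \<partial>M)"

definition cgauss_density :: "real \<Rightarrow> complex \<Rightarrow> ennreal" where
  "cgauss_density s z = ennreal (exp (- (cmod z)\<^sup>2 / s) / (pi * s))"

end

theory Submission
  imports Defs
begin

text \<open>With i.i.d. \<open>CN(0, s)\<close> channels, every pair of distinct users has the same joint channel
  law, so each slot of any pairing of distinct users contributes the same expected pair rate, and
  the average sum rate is half of it whatever the pairing: the proposed scheme (for every choice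
  of common user), scheme A and scheme B all agree. Linearity of expectation needs the pair rate
  to be integrable; it is dominated by \<open>1 + |h|\<^sup>2 + |ln |h|\<^sup>2|\<close> for each of the two channels,
  which is integrable against the complex Gaussian because in Cartesian coordinates it reduces to
  moments and logarithmic singularities of real Gaussians.\<close>

lemma integrable_gaussian_power:
  assumes "s > 0"
  shows "integrable lborel (\<lambda>x::real. exp (- x\<^sup>2 / s) * x ^ k)"
proof -
  define \<sigma> where "\<sigma> = sqrt (s / 2)"
  have \<sigma>: "\<sigma> > 0" "\<sigma>\<^sup>2 = s / 2"
    using assms by (simp_all add: \<sigma>_def)
  have normal: "exp (- x\<^sup>2 / s) * x ^ k = sqrt (2 * pi * \<sigma>\<^sup>2) * (normal_density 0 \<sigma> x * (x - 0) ^ k)" for x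
    using assms \<sigma> unfolding normal_density_def by (simp add: field_simps)
  show ?thesis
    unfolding normal by (rule integrable_mult_right[OF integrable_normal_moment[OF \<sigma>(1)]])
qed

lemma integrable_abs_powr_neg_half:
  "integrable lborel (\<lambda>x::real. indicator {-1..1} x * \<bar>x\<bar> powr (-1/2))"
proof -
  define g where "g = (\<lambda>x::real. indicator {0..1} x * x powr (-1/2))"
  have "(\<lambda>x::real. x powr (-1/2)) absolutely_integrable_on {0..1}"
    by (rule nonnegative_absolutely_integrable_1[OF integrable_on_powr_from_0]) auto
  then have "integrable lebesgue g"
    by (simp add: g_def absolutely_integrable_on_def set_integrable_def)
  moreover have "g \<in> borel_measurable lborel"
    unfolding g_def by measurable
  ultimately have g: "integrable lborel g"
    using integrable_completion by blast
  then have "integrable lborel (\<lambda>x. g x + g (0 + (-1) * x))"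
    by (intro Bochner_Integration.integrable_add lborel_integrable_real_affine) auto
  moreover have "g x + g (0 + (-1) * x) = indicator {-1..1} x * \<bar>x\<bar> powr (-1/2)" for x
    by (cases "x \<ge> 0") (auto simp: g_def indicator_def)
  ultimately show ?thesis
    by simp
qed

lemma abs_ln_le_powr_neg_half:
  fixes x :: real
  assumes "0 < x" "x \<le> 1"
  shows "\<bar>ln x\<bar> \<le> 2 * x powr (-1/2)"
proof -
  have "ln (x powr (-1/2)) \<le> x powr (-1/2) - 1"
    using assms by (intro ln_le_minus_one) simp
  moreover have "ln (x powr (-1/2)) = -1/2 * ln x"
    using assms by (simp add: ln_powr)
  ultimately show ?thesis
    using assms by simp
qed

lemma abs_ln_abs_le:
  fixes x :: real
  shows "\<bar>ln \<bar>x\<bar>\<bar> \<le> 2 * (indicator {-1..1} x * \<bar>x\<bar> powr (-1/2)) + x\<^sup>2"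
proof (cases "\<bar>x\<bar> \<le> 1")
  case True
  then have "\<bar>ln \<bar>x\<bar>\<bar> \<le> 2 * (indicator {-1..1} x * \<bar>x\<bar> powr (-1/2))"
    using abs_ln_le_powr_neg_half[of "\<bar>x\<bar>"] by (cases "x = 0") (auto simp: indicator_def)
  then show ?thesis
    using zero_le_power2[of x] by linarith
next
  case False
  have "ln \<bar>x\<bar> \<le> \<bar>x\<bar> - 1"
    using False by (intro ln_le_minus_one) auto
  moreover have "\<bar>x\<bar> \<le> x\<^sup>2"
    using False mult_left_mono[of 1 "\<bar>x\<bar>" "\<bar>x\<bar>"] by (simp add: power2_eq_square)
  moreover have "x \<notin> {-1..1}"
    using False by auto
  ultimately show ?thesis
    using False by simp
qed

lemma integrable_gaussian_abs_ln:
  assumes "s > 0"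
  shows "integrable lborel (\<lambda>x::real. exp (- x\<^sup>2 / s) * \<bar>ln \<bar>x\<bar>\<bar>)"
proof (rule Bochner_Integration.integrable_bound)
  let ?g = "\<lambda>x::real. indicator {-1..1} x * \<bar>x\<bar> powr (-1/2)"
  show "integrable lborel (\<lambda>x. 2 * ?g x + exp (- x\<^sup>2 / s) * x ^ 2)"
    using integrable_abs_powr_neg_half integrable_gaussian_power[OF assms, of 2]
    by (intro Bochner_Integration.integrable_add integrable_mult_right)
  show "AE x in lborel. norm (exp (- x\<^sup>2 / s) * \<bar>ln \<bar>x\<bar>\<bar>) \<le> norm (2 * ?g x + exp (- x\<^sup>2 / s) * x ^ 2)"
  proof (rule AE_I2)
    fix x :: real
    have e: "0 < exp (- x\<^sup>2 / s)" "exp (- x\<^sup>2 / s) \<le> 1"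
      using assms by simp_all
    have g: "0 \<le> ?g x"
      by (simp add: indicator_def)
    have "exp (- x\<^sup>2 / s) * \<bar>ln \<bar>x\<bar>\<bar> \<le> exp (- x\<^sup>2 / s) * (2 * ?g x) + exp (- x\<^sup>2 / s) * x\<^sup>2"
      using mult_left_mono[OF abs_ln_abs_le[of x] less_imp_le[OF e(1)]] by (simp add: distrib_left)
    also have "\<dots> \<le> 2 * ?g x + exp (- x\<^sup>2 / s) * x\<^sup>2"
      using e g by (simp add: mult_left_le_one_le)
    finally show "norm (exp (- x\<^sup>2 / s) * \<bar>ln \<bar>x\<bar>\<bar>) \<le> norm (2 * ?g x + exp (- x\<^sup>2 / s) * x ^ 2)"
      using g by simp
  qed
qed measurable

lemma measurable_Complex_pair [measurable]:
  "(\<lambda>p::real \<times> real. Complex (fst p) (snd p)) \<in> borel_measurable (lborel \<Otimes>\<^sub>M lborel)"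
proof -
  have "(\<lambda>p::real \<times> real. Complex (fst p) (snd p)) = (\<lambda>p. of_real (fst p) + \<i> * of_real (snd p))"
    by (auto simp: complex_eq_iff)
  then show ?thesis
    by simp
qed

lemma lborel_complex_eq_distr_Complex:
  "distr (lborel \<Otimes>\<^sub>M lborel) borel (\<lambda>p. Complex (fst p) (snd p)) = (lborel :: complex measure)"
proof (rule lborel_eqI[symmetric])
  fix l u :: complex
  assume lu: "\<And>b. b \<in> Basis \<Longrightarrow> l \<bullet> b \<le> u \<bullet> b"
  have "(\<lambda>p. Complex (fst p) (snd p)) -` box l u \<inter> space (lborel \<Otimes>\<^sub>M lborel)
      = {Re l<..<Re u} \<times> {Im l<..<Im u}"
    by (auto simp: box_def Basis_complex_def space_pair_measure)
  moreover have "Re l \<le> Re u" "Im l \<le> Im u"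
    using lu[of 1] lu[of \<i>] by (auto simp: Basis_complex_def)
  ultimately show "emeasure (distr (lborel \<Otimes>\<^sub>M lborel) borel (\<lambda>p. Complex (fst p) (snd p))) (box l u)
      = (\<Prod>b\<in>Basis. (u - l) \<bullet> b)"
    by (simp add: emeasure_distr lborel.emeasure_pair_measure_Times Basis_complex_def ennreal_mult)
qed simp

lemma integrable_lborel_complexI:
  fixes g :: "complex \<Rightarrow> real"
  assumes "g \<in> borel_measurable borel"
    and "integrable (lborel \<Otimes>\<^sub>M lborel) (\<lambda>p. g (Complex (fst p) (snd p)))"
  shows "integrable lborel g"
  using assms by (subst lborel_complex_eq_distr_Complex[symmetric], subst integrable_distr_eq) auto

lemma integrable_lborel_pair_mult:
  fixes f g :: "real \<Rightarrow> real"
  assumes f: "integrable lborel f" and g: "integrable lborel g"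
  shows "integrable (lborel \<Otimes>\<^sub>M lborel) (\<lambda>p. f (fst p) * g (snd p))"
proof (rule lborel_pair.Fubini_integrable)
  have [measurable]: "f \<in> borel_measurable lborel" "g \<in> borel_measurable lborel"
    using f g by auto
  show "(\<lambda>p. f (fst p) * g (snd p)) \<in> borel_measurable (lborel \<Otimes>\<^sub>M lborel)"
    by measurable
  show "integrable lborel (\<lambda>x. \<integral>y. norm (f (fst (x, y)) * g (snd (x, y))) \<partial>lborel)"
    using f by (simp add: abs_mult)
  show "AE x in lborel. integrable lborel (\<lambda>y. f (fst (x, y)) * g (snd (x, y)))"
    using g by simp
qed

definition log_moment :: "real \<Rightarrow> real" where
  "log_moment x = 1 + x + \<bar>ln x\<bar>"

lemma log_moment_nonneg: "0 \<le> x \<Longrightarrow> 0 \<le> log_moment x"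
  by (simp add: log_moment_def)

lemma log_moment_sum_squares_le:
  fixes x y :: real
  shows "log_moment (x\<^sup>2 + y\<^sup>2) \<le> 1 + 2 * x\<^sup>2 + 2 * y\<^sup>2 + 2 * \<bar>ln \<bar>x\<bar>\<bar> + 2 * \<bar>ln \<bar>y\<bar>\<bar>"
proof (cases "x = 0 \<and> y = 0")
  case False
  then have pos: "0 < x\<^sup>2 + y\<^sup>2"
    by (simp add: sum_power2_gt_zero_iff)
  have "ln (x\<^sup>2 + y\<^sup>2) \<le> x\<^sup>2 + y\<^sup>2"
    using ln_le_minus_one[OF pos] by linarith
  moreover have "- ln (x\<^sup>2 + y\<^sup>2) \<le> 2 * \<bar>ln \<bar>x\<bar>\<bar> + 2 * \<bar>ln \<bar>y\<bar>\<bar>"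
  proof (cases "x = 0")
    case True
    then show ?thesis
      by (simp add: ln_realpow[of "\<bar>y\<bar>" 2, simplified])
  next
    case False
    then have "ln (\<bar>x\<bar> ^ 2) \<le> ln (x\<^sup>2 + y\<^sup>2)"
      by (intro ln_mono) auto
    moreover have "ln (\<bar>x\<bar> ^ 2) = 2 * ln \<bar>x\<bar>"
      using False by (subst ln_realpow) auto
    ultimately show ?thesis
      using abs_ge_minus_self[of "ln \<bar>x\<bar>"] abs_ge_zero[of "ln \<bar>y\<bar>"] by linarith
  qed
  ultimately have "\<bar>ln (x\<^sup>2 + y\<^sup>2)\<bar> \<le> x\<^sup>2 + y\<^sup>2 + 2 * \<bar>ln \<bar>x\<bar>\<bar> + 2 * \<bar>ln \<bar>y\<bar>\<bar>"
    using zero_le_power2[of x] zero_le_power2[of y] abs_ge_zero[of "ln \<bar>x\<bar>"] abs_ge_zero[of "ln \<bar>y\<bar>"]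
    unfolding abs_le_iff by linarith
  then show ?thesis
    unfolding log_moment_def by linarith
qed (simp add: log_moment_def)

text \<open>In Cartesian coordinates the complex Gaussian weight factorises, and the logarithmic
  singularity of \<open>ln |z|\<^sup>2\<close> at the origin is dominated by the integrable one-dimensional
  singularities of \<open>ln |Re z|\<close> and \<open>ln |Im z|\<close>.\<close>
lemma integrable_cgauss_weight_log_moment:
  assumes "s > 0"
  shows "integrable lborel (\<lambda>z::complex. exp (- (cmod z)\<^sup>2 / s) * log_moment ((cmod z)\<^sup>2))"
proof (rule integrable_lborel_complexI)
  define e where "e = (\<lambda>x::real. exp (- x\<^sup>2 / s))"
  have e0: "integrable lborel e"
    using integrable_gaussian_power[OF assms, of 0] by (simp add: e_def)
  have e2: "integrable lborel (\<lambda>x. e x * x\<^sup>2)"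
    using integrable_gaussian_power[OF assms, of 2] by (simp add: e_def)
  have el: "integrable lborel (\<lambda>x. e x * \<bar>ln \<bar>x\<bar>\<bar>)"
    using integrable_gaussian_abs_ln[OF assms] by (simp add: e_def)
  let ?B = "\<lambda>x y. e x * e y + 2 * ((e x * x\<^sup>2) * e y) + 2 * (e x * (e y * y\<^sup>2))
      + 2 * ((e x * \<bar>ln \<bar>x\<bar>\<bar>) * e y) + 2 * (e x * (e y * \<bar>ln \<bar>y\<bar>\<bar>))"
  have "integrable (lborel \<Otimes>\<^sub>M lborel) (\<lambda>p. ?B (fst p) (snd p))"
    by (intro Bochner_Integration.integrable_add integrable_mult_right integrable_lborel_pair_mult e0 e2 el)
  then have "integrable (lborel \<Otimes>\<^sub>M lborel) (\<lambda>p. e (fst p) * e (snd p) * log_moment ((fst p)\<^sup>2 + (snd p)\<^sup>2))"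
  proof (rule Bochner_Integration.integrable_bound)
    show "(\<lambda>p. e (fst p) * e (snd p) * log_moment ((fst p)\<^sup>2 + (snd p)\<^sup>2))
        \<in> borel_measurable (lborel \<Otimes>\<^sub>M lborel)"
      unfolding e_def log_moment_def by measurable
    show "AE p in lborel \<Otimes>\<^sub>M lborel. norm (e (fst p) * e (snd p) * log_moment ((fst p)\<^sup>2 + (snd p)\<^sup>2))
        \<le> norm (?B (fst p) (snd p))"
    proof (rule AE_I2, clarify)
      fix x y :: real
      have exy: "0 \<le> e x * e y"
        by (simp add: e_def)
      have lm: "0 \<le> log_moment (x\<^sup>2 + y\<^sup>2)"
        by (simp add: log_moment_nonneg)
      have "e x * e y * log_moment (x\<^sup>2 + y\<^sup>2)
          \<le> e x * e y * (1 + 2 * x\<^sup>2 + 2 * y\<^sup>2 + 2 * \<bar>ln \<bar>x\<bar>\<bar> + 2 * \<bar>ln \<bar>y\<bar>\<bar>)"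
        by (rule mult_left_mono[OF log_moment_sum_squares_le exy])
      also have "\<dots> = ?B x y"
        by (simp add: algebra_simps)
      finally show "norm (e (fst (x, y)) * e (snd (x, y)) * log_moment ((fst (x, y))\<^sup>2 + (snd (x, y))\<^sup>2))
          \<le> norm (?B (fst (x, y)) (snd (x, y)))"
        using exy lm by simp
    qed
  qed
  moreover have "exp (- (cmod (Complex x y))\<^sup>2 / s) = e x * e y" for x y
    by (simp add: e_def cmod_def diff_divide_distrib mult_exp_exp)
  ultimately show "integrable (lborel \<Otimes>\<^sub>M lborel)
      (\<lambda>p. exp (- (cmod (Complex (fst p) (snd p)))\<^sup>2 / s) * log_moment ((cmod (Complex (fst p) (snd p)))\<^sup>2))"
    by (simp add: cmod_power2)
qed (simp add: log_moment_def)

lemma integrable_cgauss_log_moment: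
  assumes "s > 0"
  shows "integrable (density lborel (cgauss_density s)) (\<lambda>z. log_moment ((cmod z)\<^sup>2))"
proof -
  have "integrable lborel (\<lambda>z::complex. (exp (- (cmod z)\<^sup>2 / s) / (pi * s)) *\<^sub>R log_moment ((cmod z)\<^sup>2))"
    using integrable_mult_right[OF integrable_cgauss_weight_log_moment[OF assms], of "1 / (pi * s)"]
    by simp
  then show ?thesis
    unfolding cgauss_density_def using assms
    by (subst integrable_density) (auto simp: log_moment_def)
qed

lemma abs_log_rate_term_le:
  fixes x y P N0 :: real
  assumes x: "0 \<le> x" and y: "0 \<le> y" and P: "P > 0" and N0: "N0 > 0"
  shows "\<bar>log 2 (x / (x + y) + P * x / N0)\<bar> \<le> (P / N0 + \<bar>ln (P / N0)\<bar> + 1) / ln 2 * log_moment x"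
proof (cases "x = 0")
  case True
  have "0 \<le> (P / N0 + \<bar>ln (P / N0)\<bar> + 1) / ln 2"
    using P N0 by (intro divide_nonneg_pos add_nonneg_nonneg) auto
  with True show ?thesis
    by (simp add: log_moment_def log_def)
next
  case False
  with x have x_pos: "x > 0"
    by simp
  define a where "a = x / (x + y) + P * x / N0"
  have share: "0 \<le> x / (x + y)" "x / (x + y) \<le> 1"
    using x_pos y by auto
  have snr_pos: "P / N0 * x > 0"
    using x_pos P N0 by simp
  have a_bounds: "P / N0 * x \<le> a" "a \<le> 1 + P / N0 * x"
    using share by (simp_all add: a_def)
  have "ln a \<le> ln (1 + P / N0 * x)"
    using a_bounds snr_pos by (subst ln_le_cancel_iff) auto
  also have "\<dots> \<le> P / N0 * x"
    using snr_pos by (intro ln_add_one_self_le_self) simp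
  finally have "ln a \<le> P / N0 * x" .
  moreover have "ln (P / N0 * x) \<le> ln a"
    using a_bounds(1) snr_pos by (subst ln_le_cancel_iff) auto
  moreover have "ln (P / N0 * x) = ln (P / N0) + ln x"
    using P N0 x_pos by (subst ln_mult) auto
  ultimately have "\<bar>ln a\<bar> \<le> P / N0 * x + \<bar>ln (P / N0)\<bar> + \<bar>ln x\<bar>"
    using snr_pos abs_ge_zero[of "ln (P / N0)"] abs_ge_zero[of "ln x"]
      abs_ge_minus_self[of "ln (P / N0)"] abs_ge_minus_self[of "ln x"]
    unfolding abs_le_iff by linarith
  also have "\<dots> \<le> (P / N0 + \<bar>ln (P / N0)\<bar> + 1) * log_moment x"
    using snr_pos x_pos P N0 unfolding log_moment_def
    by (simp add: algebra_simps)
  finally show ?thesis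
    by (simp add: log_def a_def divide_right_mono)
qed

lemma abs_pair_rate_le:
  fixes x y P N0 :: real
  assumes "0 \<le> x" "0 \<le> y" "P > 0" "N0 > 0"
  shows "\<bar>pair_rate P N0 x y\<bar> \<le> (P / N0 + \<bar>ln (P / N0)\<bar> + 1) / ln 2 * (log_moment x + log_moment y)"
  using abs_log_rate_term_le[OF assms] abs_log_rate_term_le[OF assms(2,1,3,4)]
  unfolding pair_rate_def by (simp add: add.commute distrib_left)

definition expected_pair_rate :: "real \<Rightarrow> real \<Rightarrow> real \<Rightarrow> real" where
  "expected_pair_rate P N0 s =
     (\<integral>z. pair_rate P N0 ((cmod (fst z))\<^sup>2) ((cmod (snd z))\<^sup>2)
        \<partial>(density lborel (cgauss_density s) \<Otimes>\<^sub>M density lborel (cgauss_density s)))"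

definition valid_pairing :: "nat \<Rightarrow> (nat \<Rightarrow> nat \<times> nat) \<Rightarrow> bool" where
  "valid_pairing L pr \<longleftrightarrow>
     (\<forall>t\<in>{1..L-1}. fst (pr t) \<in> {1..L} \<and> snd (pr t) \<in> {1..L} \<and> fst (pr t) \<noteq> snd (pr t))"

lemma valid_pairing_proposed: "i \<in> {1..L} \<Longrightarrow> valid_pairing L (proposed_pairing i)"
  by (auto simp: valid_pairing_def proposed_pairing_def)

lemma valid_pairing_schemeA: "valid_pairing L schemeA_pairing"
  by (auto simp: valid_pairing_def schemeA_pairing_def)

lemma valid_pairing_schemeB: "valid_pairing L (schemeB_pairing L)"
  unfolding valid_pairing_def schemeB_pairing_def by auto

context prob_space
begin

lemma indep_var_of_indep_vars:
  assumes "indep_vars N X I" "a \<in> I" "b \<in> I" "a \<noteq> b"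
  shows "indep_var (N a) (X a) (N b) (X b)"
proof -
  have "indep_var (N a) ((\<lambda>f. f a) \<circ> (\<lambda>\<omega>. restrict (\<lambda>i. X i \<omega>) {a}))
                  (N b) ((\<lambda>f. f b) \<circ> (\<lambda>\<omega>. restrict (\<lambda>i. X i \<omega>) {b}))"
    using assms by (intro indep_var_compose[OF indep_var_restrict[OF assms(1)]]) auto
  then show ?thesis
    by (simp add: comp_def)
qed

lemma integral_indep_var_pair:
  fixes f :: "'s \<times> 's \<Rightarrow> real"
  assumes "indep_var S X T Y" and [measurable]: "f \<in> borel_measurable (S \<Otimes>\<^sub>M T)"
  shows "(\<integral>\<omega>. f (X \<omega>, Y \<omega>) \<partial>M) = (\<integral>z. f z \<partial>(distr M S X \<Otimes>\<^sub>M distr M T Y))"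
proof -
  have [measurable]: "X \<in> measurable M S" "Y \<in> measurable M T"
    using indep_var_rv1[OF assms(1)] indep_var_rv2[OF assms(1)] by auto
  show ?thesis
    using assms(1) by (simp add: indep_var_distribution_eq integral_distr)
qed

lemma integrable_pair_rate_cgauss:
  assumes X: "distributed M lborel X (cgauss_density s)" and Y: "distributed M lborel Y (cgauss_density s)"
    and "s > 0" "P > 0" "N0 > 0"
  shows "integrable M (\<lambda>\<omega>. pair_rate P N0 ((cmod (X \<omega>))\<^sup>2) ((cmod (Y \<omega>))\<^sup>2))"
proof (rule Bochner_Integration.integrable_bound)
  have "integrable M (\<lambda>\<omega>. log_moment ((cmod (Z \<omega>))\<^sup>2))"
    if "distributed M lborel Z (cgauss_density s)" for Z
    using integrable_cgauss_log_moment[OF \<open>s > 0\<close>] that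
    by (subst (asm) distributed_distr_eq_density[OF that, symmetric], subst (asm) integrable_distr_eq)
       (auto simp: distributed_def log_moment_def)
  then show "integrable M (\<lambda>\<omega>. (P / N0 + \<bar>ln (P / N0)\<bar> + 1) / ln 2 *
      (log_moment ((cmod (X \<omega>))\<^sup>2) + log_moment ((cmod (Y \<omega>))\<^sup>2)))"
    using X Y by (intro integrable_mult_right Bochner_Integration.integrable_add)
  show "AE \<omega> in M. norm (pair_rate P N0 ((cmod (X \<omega>))\<^sup>2) ((cmod (Y \<omega>))\<^sup>2))
      \<le> norm ((P / N0 + \<bar>ln (P / N0)\<bar> + 1) / ln 2 *
          (log_moment ((cmod (X \<omega>))\<^sup>2) + log_moment ((cmod (Y \<omega>))\<^sup>2)))"
  proof (rule AE_I2)
    fix \<omega>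
    have bound_nonneg: "0 \<le> (P / N0 + \<bar>ln (P / N0)\<bar> + 1) / ln 2 *
          (log_moment ((cmod (X \<omega>))\<^sup>2) + log_moment ((cmod (Y \<omega>))\<^sup>2))"
      using assms(4,5) by (intro mult_nonneg_nonneg divide_nonneg_pos add_nonneg_nonneg log_moment_nonneg) auto
    show "norm (pair_rate P N0 ((cmod (X \<omega>))\<^sup>2) ((cmod (Y \<omega>))\<^sup>2))
      \<le> norm ((P / N0 + \<bar>ln (P / N0)\<bar> + 1) / ln 2 *
          (log_moment ((cmod (X \<omega>))\<^sup>2) + log_moment ((cmod (Y \<omega>))\<^sup>2)))"
      unfolding real_norm_def abs_of_nonneg[OF bound_nonneg]
      using abs_pair_rate_le[of "(cmod (X \<omega>))\<^sup>2" "(cmod (Y \<omega>))\<^sup>2" P N0] assms(4,5) by simp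
  qed
  have [measurable]: "X \<in> borel_measurable M" "Y \<in> borel_measurable M"
    using X Y by (simp_all add: distributed_def)
  show "(\<lambda>\<omega>. pair_rate P N0 ((cmod (X \<omega>))\<^sup>2) ((cmod (Y \<omega>))\<^sup>2)) \<in> borel_measurable M"
    unfolding pair_rate_def by measurable
qed

lemma integral_pair_rate_cgauss:
  assumes "indep_var borel X borel Y"
    and X: "distributed M lborel X (cgauss_density s)" and Y: "distributed M lborel Y (cgauss_density s)"
  shows "(\<integral>\<omega>. pair_rate P N0 ((cmod (X \<omega>))\<^sup>2) ((cmod (Y \<omega>))\<^sup>2) \<partial>M) = expected_pair_rate P N0 s"
proof -
  have "distr M borel Z = density lborel (cgauss_density s)"
    if "distributed M lborel Z (cgauss_density s)" for Z
    using distributed_distr_eq_density[OF that] by (metis distr_cong sets_lborel)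
  then show ?thesis
    using integral_indep_var_pair[OF assms(1), of "\<lambda>z. pair_rate P N0 ((cmod (fst z))\<^sup>2) ((cmod (snd z))\<^sup>2)"] X Y
    unfolding expected_pair_rate_def by (simp add: pair_rate_def)
qed

lemma avg_sum_rate_valid_pairing:
  assumes "L \<ge> 2" "s > 0" "P > 0" "N0 > 0"
    and indep: "indep_vars (\<lambda>_. borel) h {1..L}"
    and distr: "\<forall>j\<in>{1..L}. distributed M lborel (h j) (cgauss_density s)"
    and "valid_pairing L pr"
  shows "avg_sum_rate M L P N0 h pr = expected_pair_rate P N0 s / 2"
proof -
  let ?f = "\<lambda>t \<omega>. pair_rate P N0 ((cmod (h (fst (pr t)) \<omega>))\<^sup>2) ((cmod (h (snd (pr t)) \<omega>))\<^sup>2)"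
  have slot: "integrable M (?f t) \<and> integral\<^sup>L M (?f t) = expected_pair_rate P N0 s" if "t \<in> {1..L-1}" for t
    using \<open>valid_pairing L pr\<close> that distr assms(2-4)
    by (auto simp: valid_pairing_def intro!: integrable_pair_rate_cgauss integral_pair_rate_cgauss
        indep_var_of_indep_vars[OF indep])
  have "avg_sum_rate M L P N0 h pr = (\<Sum>t\<in>{1..L-1}. integral\<^sup>L M (?f t)) / (2 * (real L - 1))"
    unfolding avg_sum_rate_def sum_rate_def using slot by (simp add: Bochner_Integration.integral_sum)
  also have "\<dots> = (real L - 1) * expected_pair_rate P N0 s / (2 * (real L - 1))"
    using slot \<open>L \<ge> 2\<close> by (simp add: of_nat_diff)
  also have "\<dots> = expected_pair_rate P N0 s / 2"
    using \<open>L \<ge> 2\<close> by (simp add: field_simps)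
  finally show ?thesis .
qed

end

theorem proposition4:
  fixes M :: "'a measure" and h :: "nat \<Rightarrow> 'a \<Rightarrow> complex"
    and L :: nat and P N0 s :: real and p :: "nat pmf"
  assumes "prob_space M"
    and "L \<ge> 2" and "P > 0" and "N0 > 0" and "s > 0"
    and "prob_space.indep_vars M (\<lambda>_. borel) h {1..L}"
    and "\<forall>j\<in>{1..L}. distributed M lborel (h j) (cgauss_density s)"
    and "set_pmf p \<subseteq> {1..L}"
  shows "measure_pmf.expectation p (\<lambda>i. avg_sum_rate M L P N0 h (proposed_pairing i))
           = avg_sum_rate M L P N0 h schemeA_pairing
       \<and> avg_sum_rate M L P N0 h schemeA_pairing
           = avg_sum_rate M L P N0 h (schemeB_pairing L)"
proof -
  interpret prob_space M
    by fact
  have avg: "avg_sum_rate M L P N0 h pr = expected_pair_rate P N0 s / 2" if "valid_pairing L pr" for pr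
    using avg_sum_rate_valid_pairing[OF assms(2,5,3,4,6,7) that] .
  have "measure_pmf.expectation p (\<lambda>i. avg_sum_rate M L P N0 h (proposed_pairing i))
      = measure_pmf.expectation p (\<lambda>i. expected_pair_rate P N0 s / 2)"
    using assms(8) by (intro integral_cong_AE) (auto simp: AE_measure_pmf_iff avg valid_pairing_proposed)
  then show ?thesis
    by (simp add: avg valid_pairing_schemeA valid_pairing_schemeB)
qed

end
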